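(* Let $p$ be an odd prime and let $G$ be a finite $p$-group with cyclic derived subgroup $G'$. Then every conjugacy class of $G$ is a coset $Kg$ of some subgroup $K\subseteq G'$. *)

theory Defs
  imports "HOL-Algebra.Algebra"
begin

definition conj_class :: "('a, 'b) monoid_scheme \<Rightarrow> 'a \<Rightarrow> 'a set" where
  "conj_class G g = {h \<otimes>\<^bsub>G\<^esub> g \<otimes>\<^bsub>G\<^esub> inv\<^bsub>G\<^esub> h | h. h \<in> carrier G}"

end

theory Submission
  imports Defs "HOL-Number_Theory.Residues"
begin

(* Let S be the set of commutators h g h^-1 g^-1 with h in G, so that the conjugacy class of g
   is the coset S g and S lies in G'. Fix h and s = h g h^-1 g^-1. Since G' is cyclic and
   normal, conjugation by h acts on it as a power map x |-> x^r, and r = 1 (mod p) because h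
   has p-power order. Then h^n g h^-n = s^(1 + r + ... + r^(n-1)) g, and for odd p these
   geometric sums run through all residues modulo every power of p, so the cyclic group <s>
   lies in S. As the subgroups of the cyclic p-group G' form a chain, S, being the union of
   the groups <s> with s in S, is one of them. *)

definition geom_sum :: "nat \<Rightarrow> nat \<Rightarrow> nat" where
  "geom_sum r n = (\<Sum>i<n. r ^ i)"

lemma geom_sum_add: "geom_sum r (m + n) = geom_sum r m + r ^ m * geom_sum r n"
  by (induction n) (simp_all add: geom_sum_def power_add algebra_simps)

lemma geom_sum_Suc: "geom_sum r (Suc n) = r * geom_sum r n + 1"
  using geom_sum_add[of r 1 n] by (simp add: geom_sum_def)

lemma geom_sum_mult: "geom_sum r (m * n) = geom_sum r m * geom_sum (r ^ m) n"
proof (induction n)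
  case (Suc n)
  have "geom_sum r (m * Suc n) = geom_sum r (m * n) + r ^ (m * n) * geom_sum r m"
    using geom_sum_add[of r "m * n" m] by (simp add: add.commute)
  also have "\<dots> = geom_sum r m * (geom_sum (r ^ m) n + (r ^ m) ^ n)"
    by (simp add: Suc power_mult algebra_simps)
  finally show ?case
    by (simp add: geom_sum_def)
qed (simp add: geom_sum_def)

lemma geom_sum_cong_one:
  assumes "[r = 1] (mod m)"
  shows "[geom_sum r n = n] (mod m)"
proof -
  have "[(\<Sum>i<n. r ^ i) = (\<Sum>i<n. 1)] (mod m)"
    by (rule cong_sum) (use cong_pow[OF assms] in fastforce)
  then show ?thesis by (simp add: geom_sum_def)
qed

lemma one_plus_mult_power_cong: "[(1 + m * t) ^ i = 1 + i * m * t] (mod m\<^sup>2)"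
  for m t i :: nat
proof (induction i)
  case (Suc i)
  have "[(1 + m * t) ^ i * (1 + m * t) = (1 + i * m * t) * (1 + m * t)] (mod m\<^sup>2)"
    using Suc by (rule cong_mult) (rule cong_refl)
  then have "[(1 + m * t) ^ Suc i = (1 + i * m * t) * (1 + m * t)] (mod m\<^sup>2)"
    by (simp only: power_Suc2)
  moreover have "(1 + i * m * t) * (1 + m * t) = 1 + Suc i * m * t + (i * t * t) * m\<^sup>2"
    by (simp add: algebra_simps power2_eq_square)
  moreover have "[1 + Suc i * m * t + (i * t * t) * m\<^sup>2 = 1 + Suc i * m * t] (mod m\<^sup>2)"
    by (simp add: cong_def)
  ultimately show ?case
    by (metis cong_trans)
qed simp

(* The oddness of p enters here: 0 + 1 + ... + (p - 1) = p (p - 1) / 2 is a multiple of p. *)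
lemma geom_sum_prime_cong:
  assumes "Factorial_Ring.prime p" "odd p" "[r = 1] (mod p)"
  shows "[geom_sum r p = p] (mod p\<^sup>2)"
proof -
  have "r mod p = 1"
    using assms(3) prime_gt_1_nat[OF assms(1)] by (simp add: cong_def)
  then obtain t where r: "r = 1 + p * t"
    by (metis div_mult_mod_eq add.commute mult.commute)
  obtain q where q: "p = 2 * q + 1"
    using assms(2) oddE by blast
  have "[geom_sum r p = (\<Sum>i<p. 1 + i * p * t)] (mod p\<^sup>2)"
    unfolding geom_sum_def r by (rule cong_sum) (rule one_plus_mult_power_cong)
  also have "(\<Sum>i<p. 1 + i * p * t) = p + (\<Sum>i<p. i) * p * t"
    by (simp only: sum.distrib sum_distrib_right) simp
  also have "(\<Sum>i<p. i) = p * q"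
    using Sum_Ico_nat[of 0 p] q by (simp add: atLeast0LessThan)
  also have "p + p * q * p * t = p + (q * t) * p\<^sup>2"
    by (simp add: power2_eq_square)
  also have "[\<dots> = p] (mod p\<^sup>2)"
    by (simp add: cong_def)
  finally show ?thesis .
qed

lemma prime_power_dvd_geom_sum_imp_dvd:
  assumes "Factorial_Ring.prime p" "odd p" "[r = 1] (mod p)" "p ^ j dvd geom_sum r n"
  shows "p ^ j dvd n"
  using assms(3,4)
proof (induction j arbitrary: r n)
  case (Suc j)
  have "p dvd geom_sum r n"
    using dvd_trans[of p "p ^ Suc j"] Suc.prems(2) by simp
  then have "p dvd n"
    using geom_sum_cong_one[OF Suc.prems(1)] cong_dvd_iff by blast
  then obtain n' where n: "n = p * n'" ..
  have p_cong: "[geom_sum r p = p] (mod p\<^sup>2)"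
    using geom_sum_prime_cong[OF assms(1,2) Suc.prems(1)] .
  then have "p dvd geom_sum r p"
    by (metis cong_dvd_iff cong_dvd_modulus_nat dvd_refl dvd_power zero_less_numeral)
  then obtain w where w: "geom_sum r p = p * w" ..
  have "[p * w = p * 1] (mod p * p)"
    using p_cong w by (simp add: power2_eq_square)
  then have "[w = 1] (mod p)"
    using prime_gt_0_nat[OF assms(1)] by (simp add: cong_def mod_mult_mult1)
  then have "coprime (p ^ j) w"
    by (metis coprime_1_right coprime_cong_cong_right coprime_power_left_iff)
  have "p ^ Suc j dvd p * (w * geom_sum (r ^ p) n')"
    using Suc.prems(2) by (simp add: n w geom_sum_mult mult.assoc)
  then have "p ^ j dvd w * geom_sum (r ^ p) n'"
    using prime_gt_0_nat[OF assms(1)] by simp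
  then have "p ^ j dvd geom_sum (r ^ p) n'"
    using \<open>coprime (p ^ j) w\<close> coprime_dvd_mult_right_iff by blast
  moreover have "[r ^ p = 1] (mod p)"
    using cong_pow[OF Suc.prems(1), of p] by simp
  ultimately have "p ^ j dvd n'"
    using Suc.IH by blast
  then show ?case
    by (simp add: n)
qed simp

lemma geom_sum_surj_mod_prime_power:
  assumes "Factorial_Ring.prime p" "odd p" "[r = 1] (mod p)"
  obtains n where "[geom_sum r n = m] (mod p ^ j)"
proof -
  define M where "M = p ^ j"
  have "M > 0"
    using prime_gt_0_nat[OF assms(1)] by (simp add: M_def)
  define f where "f n = geom_sum r n mod M" for n
  have f_neq: "f a \<noteq> f b" if "a < b" "b < M" for a b
  proof
    assume "f a = f b"
    then have "[geom_sum r a + r ^ a * geom_sum r (b - a) = geom_sum r a + 0] (mod M)"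
      using geom_sum_add[of r a "b - a"] \<open>a < b\<close> by (simp add: f_def cong_def)
    then have "M dvd r ^ a * geom_sum r (b - a)"
      by (simp only: cong_add_lcancel_nat cong_0_iff)
    moreover have "coprime M (r ^ a)"
      using assms(3) by (simp add: M_def coprime_cong_cong_right coprime_commute)
    ultimately have "M dvd geom_sum r (b - a)"
      using coprime_dvd_mult_right_iff by blast
    then have "M dvd b - a"
      using prime_power_dvd_geom_sum_imp_dvd[OF assms] by (simp add: M_def)
    then show False
      using that by (simp add: nat_dvd_not_less)
  qed
  have "inj_on f {..<M}"
    by (rule inj_onI) (metis f_neq lessThan_iff linorder_neqE_nat)
  moreover have "f ` {..<M} \<subseteq> {..<M}"
    using \<open>M > 0\<close> by (auto simp: f_def)
  ultimately have "f ` {..<M} = {..<M}"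
    by (simp add: endo_inj_surj)
  then obtain n where "f n = m mod M"
    using \<open>M > 0\<close> by (metis imageE lessThan_iff mod_less_divisor)
  then show ?thesis
    using that by (simp add: f_def cong_def M_def)
qed

lemma cong_power_prime_power_self:
  assumes "Factorial_Ring.prime p"
  shows "[x ^ (p ^ k) = x] (mod p)"
proof (induction k)
  case (Suc k)
  have "[y ^ p = y] (mod p)" for y :: nat
  proof (cases "p dvd y")
    case True
    then have "[y = 0] (mod p)"
      by (simp add: cong_0_iff)
    moreover from this have "[y ^ p = 0 ^ p] (mod p)"
      by (rule cong_pow)
    ultimately show ?thesis
      using prime_gt_0_nat[OF assms] by (metis cong_sym cong_trans power_0_left not_less0 gr0_conv_Suc)
  next
    case False
    then have "[y * y ^ (p - 1) = y * 1] (mod p)"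
      using fermat_theorem[OF assms] cong_scalar_left by blast
    then show ?thesis
      using prime_gt_0_nat[OF assms] by (simp add: power_eq_if)
  qed
  then have "[(x ^ (p ^ k)) ^ p = x ^ (p ^ k)] (mod p)" .
  then show ?case
    using Suc cong_trans by (metis power_Suc2 power_mult)
qed simp

context group
begin

lemma conj_mult:
  assumes "h \<in> carrier G" "x \<in> carrier G" "y \<in> carrier G"
  shows "h \<otimes> (x \<otimes> y) \<otimes> inv h = (h \<otimes> x \<otimes> inv h) \<otimes> (h \<otimes> y \<otimes> inv h)"
  using assms by (simp add: m_assoc inv_solve_left)

lemma conj_nat_pow:
  assumes "h \<in> carrier G" "x \<in> carrier G"
  shows "h \<otimes> x [^] (k::nat) \<otimes> inv h = (h \<otimes> x \<otimes> inv h) [^] k"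
proof (induction k)
  case (Suc k)
  have "h \<otimes> x [^] Suc k \<otimes> inv h = (h \<otimes> x [^] k \<otimes> inv h) \<otimes> (h \<otimes> x \<otimes> inv h)"
    using conj_mult assms by simp
  then show ?case
    using Suc by simp
qed (use assms in simp)

lemma conj_nat_pow_Suc:
  assumes "h \<in> carrier G" "x \<in> carrier G"
  shows "h [^] (Suc n) \<otimes> x \<otimes> inv (h [^] Suc n) = h \<otimes> (h [^] n \<otimes> x \<otimes> inv (h [^] n)) \<otimes> inv h"
  unfolding nat_pow_Suc2[OF assms(1)] using assms by (simp add: inv_mult_group m_assoc)

lemma conj_power_iterate:
  assumes "h \<in> carrier G" "s \<in> carrier G" "h \<otimes> s \<otimes> inv h = s [^] (\<rho>::nat)"
  shows "h [^] n \<otimes> s \<otimes> inv (h [^] n) = s [^] (\<rho> ^ n)"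
proof (induction n)
  case (Suc n)
  have "h [^] Suc n \<otimes> s \<otimes> inv (h [^] Suc n) = h \<otimes> s [^] (\<rho> ^ n) \<otimes> inv h"
    using Suc assms by (simp only: conj_nat_pow_Suc)
  also have "\<dots> = (s [^] \<rho>) [^] (\<rho> ^ n)"
    using assms by (simp add: conj_nat_pow)
  finally show ?case
    using assms by (simp add: nat_pow_pow mult.commute)
qed (use assms in simp)

lemma conj_orbit_geom_sum:
  assumes "h \<in> carrier G" "g \<in> carrier G" "s \<in> carrier G"
    and "h \<otimes> s \<otimes> inv h = s [^] (\<rho>::nat)" "h \<otimes> g \<otimes> inv h = s \<otimes> g"
  shows "h [^] n \<otimes> g \<otimes> inv (h [^] n) = s [^] geom_sum \<rho> n \<otimes> g"
proof (induction n)
  case (Suc n)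
  have "h [^] Suc n \<otimes> g \<otimes> inv (h [^] Suc n) = h \<otimes> (s [^] geom_sum \<rho> n \<otimes> g) \<otimes> inv h"
    using Suc assms by (simp only: conj_nat_pow_Suc)
  also have "\<dots> = (s [^] \<rho>) [^] geom_sum \<rho> n \<otimes> (s \<otimes> g)"
    using assms by (simp add: conj_mult conj_nat_pow)
  also have "\<dots> = s [^] (\<rho> * geom_sum \<rho> n) \<otimes> s [^] (1::nat) \<otimes> g"
    using assms by (simp add: nat_pow_pow m_assoc)
  also have "\<dots> = s [^] geom_sum \<rho> (Suc n) \<otimes> g"
    using assms by (simp only: nat_pow_mult geom_sum_Suc)
  finally show ?case .
qed (use assms in \<open>simp add: geom_sum_def\<close>)

lemma nat_pow_eq_iff_cong:
  assumes "x \<in> carrier G"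
  shows "x [^] (a::nat) = x [^] b \<longleftrightarrow> [a = b] (mod ord x)"
proof -
  have "x [^] a = x [^] b \<longleftrightarrow> int (ord x) dvd int b - int a"
    using int_pow_eq[OF assms, of "int a" "int b"] by (simp add: int_pow_int)
  also have "\<dots> \<longleftrightarrow> [int b = int a] (mod int (ord x))"
    by (simp add: cong_iff_dvd_diff)
  finally show ?thesis
    by (simp add: cong_int_iff cong_sym_eq)
qed

lemma ord_prime_power:
  assumes "Factorial_Ring.prime p" "order G = p ^ N" "x \<in> carrier G"
  obtains k where "ord x = p ^ k"
  using ord_dvd_group_order[OF assms(3)] assms(2) divides_primepow_nat[OF assms(1)] by auto

lemma conj_exponent_cong_one:
  assumes "Factorial_Ring.prime p" "order G = p ^ N" "h \<in> carrier G" "s \<in> carrier G"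
    and "h \<otimes> s \<otimes> inv h = s [^] (\<rho>::nat)" "p dvd ord s"
  shows "[\<rho> = 1] (mod p)"
proof -
  obtain k where k: "ord h = p ^ k"
    using ord_prime_power[OF assms(1-3)] .
  have "s [^] (\<rho> ^ ord h) = s"
    using conj_power_iterate[OF assms(3-5), of "ord h"] assms(3,4) by simp
  then have "[\<rho> ^ p ^ k = 1] (mod ord s)"
    using nat_pow_eq_iff_cong[OF assms(4), of "\<rho> ^ ord h" 1] assms(4) k by simp
  then have "[\<rho> ^ p ^ k = 1] (mod p)"
    using assms(6) cong_dvd_modulus_nat by blast
  then show ?thesis
    using cong_power_prime_power_self[OF assms(1), of \<rho> k] by (metis cong_sym cong_trans)
qed

lemma conj_cyclic_normal_eq_nat_pow:
  assumes "finite (carrier G)" "H \<lhd> G" "x \<in> carrier G" "H = generate G {x}"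
    and "s \<in> H" "h \<in> carrier G"
  obtains \<rho> :: nat where "h \<otimes> s \<otimes> inv h = s [^] \<rho>"
proof -
  have H: "H = {x [^] k | k. k \<in> (UNIV :: nat set)}"
    using generate_pow_on_finite_carrier[OF assms(1,3)] assms(4) by simp
  obtain k :: nat where s: "s = x [^] k"
    using assms(5) H by blast
  have "x \<in> H"
    using assms(4) by (simp add: generate.incl)
  then have "h \<otimes> x \<otimes> inv h \<in> H"
    using normal.inv_op_closed2[OF assms(2,6)] by blast
  then obtain \<rho> :: nat where "h \<otimes> x \<otimes> inv h = x [^] \<rho>"
    using H by blast
  then have "h \<otimes> s \<otimes> inv h = (x [^] \<rho>) [^] k"
    using s conj_nat_pow[OF assms(6,3)] by simp
  also have "\<dots> = s [^] \<rho>"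
    using assms(3) s by (simp add: nat_pow_pow mult.commute)
  finally show ?thesis
    by (rule that)
qed

lemma cyclic_subgroup_eq_generate:
  assumes "subgroup H G" "cyclic_group (G\<lparr>carrier := H\<rparr>)"
  obtains x where "x \<in> H" "H = generate G {x}"
proof -
  obtain x where x: "x \<in> H" "subgroup_generated (G\<lparr>carrier := H\<rparr>) {x} = G\<lparr>carrier := H\<rparr>"
    using assms(2) unfolding cyclic_group_def by auto
  have "H = carrier (subgroup_generated (G\<lparr>carrier := H\<rparr>) {x})"
    using x(2) by simp
  also have "\<dots> = generate (G\<lparr>carrier := H\<rparr>) {x}"
    using x(1) by (simp add: carrier_subgroup_generated Int_absorb1)
  also have "\<dots> = generate G {x}"
    using x(1) generate_consistent[OF _ assms(1)] by simp
  finally show ?thesis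
    using that x(1) by blast
qed

lemma generate_nat_pow_subset_if_gcd_dvd:
  assumes "x \<in> carrier G" "gcd t (ord x) dvd u"
  shows "generate G {x [^] (u::nat)} \<subseteq> generate G {x [^] (t::nat)}"
proof (rule generate_subgroup_incl)
  obtain \<alpha> \<beta> :: int where ab: "\<alpha> * int t + \<beta> * int (ord x) = gcd (int t) (int (ord x))"
    using bezout_int by blast
  obtain q where q: "u = gcd t (ord x) * q"
    using assms(2) by blast
  have "int u = int q * (\<alpha> * int t + \<beta> * int (ord x))"
    using ab by (simp add: q)
  then have "int u = int t * (\<alpha> * int q) + int (ord x) * (\<beta> * int q)"
    by (simp add: algebra_simps)
  then have "x [^] int u = x [^] (int t * (\<alpha> * int q))"
    using int_pow_eq[OF assms(1)] by simp
  also have "\<dots> = (x [^] int t) [^] (\<alpha> * int q)"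
    using assms(1) by (simp add: int_pow_pow)
  also have "\<dots> = (x [^] t) [^] (\<alpha> * int q)"
    by (simp add: int_pow_int)
  finally show "{x [^] u} \<subseteq> generate G {x [^] t}"
    using generate_pow[of "x [^] t"] assms(1) by (auto simp: int_pow_int)
  show "subgroup (generate G {x [^] t}) G"
    using assms(1) by (simp add: generate_is_subgroup)
qed

lemma cyclic_prime_power_subgroups_chain:
  assumes "Factorial_Ring.prime p" "x \<in> carrier G" "ord x dvd p ^ N"
    and "a \<in> generate G {x}" "b \<in> generate G {x}"
  shows "generate G {a} \<subseteq> generate G {b} \<or> generate G {b} \<subseteq> generate G {a}"
proof -
  have "ord x \<noteq> 0"
    using assms(1,3) prime_gt_0_nat by (metis dvd_0_left_iff power_not_zero less_not_refl)
  then obtain t u :: nat where ab: "a = x [^] t" "b = x [^] u"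
    using generate_pow_nat[OF assms(2)] assms(4,5) by blast
  obtain i i' where i: "gcd t (ord x) = p ^ i" and i': "gcd u (ord x) = p ^ i'"
    using divides_primepow_nat[OF assms(1)] dvd_trans[OF gcd_dvd2 assms(3)] by meson
  show ?thesis
  proof (cases "i \<le> i'")
    case True
    then have "gcd t (ord x) dvd u"
      using i i' le_imp_power_dvd dvd_trans gcd_dvd1 by metis
    then show ?thesis
      using generate_nat_pow_subset_if_gcd_dvd[OF assms(2)] ab by blast
  next
    case False
    then have "gcd u (ord x) dvd t"
      using i i' le_imp_power_dvd dvd_trans gcd_dvd1 by (metis nat_le_linear)
    then show ?thesis
      using generate_nat_pow_subset_if_gcd_dvd[OF assms(2)] ab by blast
  qed
qed

lemma subgroup_if_union_of_cyclic_chain: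
  assumes "finite S" "S \<noteq> {}" "S \<subseteq> carrier G"
    and "\<And>s. s \<in> S \<Longrightarrow> generate G {s} \<subseteq> S"
    and "\<And>a b. a \<in> S \<Longrightarrow> b \<in> S \<Longrightarrow> generate G {a} \<subseteq> generate G {b} \<or> generate G {b} \<subseteq> generate G {a}"
  shows "subgroup S G"
proof -
  let ?C = "(\<lambda>s. generate G {s}) ` S"
  have "\<Union>?C = S"
    using assms(4) generate.incl by fastforce
  moreover have "\<Union>?C \<in> ?C"
    by (rule Union_in_chain) (use assms(1,2,5) in \<open>auto simp: subset_chain_def\<close>)
  ultimately obtain a where "a \<in> S" "S = generate G {a}"
    by auto
  then show ?thesis
    using assms(3) by (auto intro: generate_is_subgroup)
qed

end

definition commutators_with :: "('a, 'b) monoid_scheme \<Rightarrow> 'a \<Rightarrow> 'a set" where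
  "commutators_with G g = {h \<otimes>\<^bsub>G\<^esub> g \<otimes>\<^bsub>G\<^esub> inv\<^bsub>G\<^esub> h \<otimes>\<^bsub>G\<^esub> inv\<^bsub>G\<^esub> g | h. h \<in> carrier G}"

context group
begin

lemma conj_class_eq_commutators_with_rcos:
  assumes "g \<in> carrier G"
  shows "conj_class G g = commutators_with G g #> g"
proof -
  have "commutators_with G g #> g = (\<lambda>h. h \<otimes> g \<otimes> inv h \<otimes> inv g \<otimes> g) ` carrier G"
    unfolding commutators_with_def r_coset_def Setcompr_eq_image UNION_singleton_eq_range
    by (simp add: image_image)
  also have "\<dots> = (\<lambda>h. h \<otimes> g \<otimes> inv h) ` carrier G"
    using assms by (intro image_cong) (simp_all add: m_assoc)
  finally show ?thesis
    by (simp add: conj_class_def Setcompr_eq_image)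
qed

lemma commutators_with_subset_derived:
  assumes "g \<in> carrier G"
  shows "commutators_with G g \<subseteq> derived G (carrier G)"
proof
  fix y
  assume "y \<in> commutators_with G g"
  then have "y \<in> derived_set G (carrier G)"
    unfolding commutators_with_def using assms by blast
  then show "y \<in> derived G (carrier G)"
    unfolding derived_def by (rule generate.incl)
qed

lemma one_mem_commutators_with:
  assumes "g \<in> carrier G"
  shows "\<one> \<in> commutators_with G g"
proof -
  have "\<one> = \<one> \<otimes> g \<otimes> inv \<one> \<otimes> inv g"
    using assms by simp
  then show ?thesis
    unfolding commutators_with_def by blast
qed

lemma generate_commutator_subset_commutators_with:
  assumes "Factorial_Ring.prime p" "odd p" "order G = p ^ N" "h \<in> carrier G" "g \<in> carrier G"
    and "h \<otimes> (h \<otimes> g \<otimes> inv h \<otimes> inv g) \<otimes> inv h = (h \<otimes> g \<otimes> inv h \<otimes> inv g) [^] (\<rho>::nat)"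
  shows "generate G {h \<otimes> g \<otimes> inv h \<otimes> inv g} \<subseteq> commutators_with G g"
proof
  define s where "s = h \<otimes> g \<otimes> inv h \<otimes> inv g"
  have s: "s \<in> carrier G"
    using assms(4,5) by (simp add: s_def)
  have hs: "h \<otimes> s \<otimes> inv h = s [^] \<rho>"
    using assms(6) by (simp add: s_def)
  have hg: "h \<otimes> g \<otimes> inv h = s \<otimes> g"
    using assms(4,5) by (simp add: s_def m_assoc)
  have "finite (carrier G)"
    using assms(3) prime_gt_0_nat[OF assms(1)] order_gt_0_iff_finite by simp
  fix y
  assume "y \<in> generate G {s}"
  then obtain m :: nat where y: "y = s [^] m"
    using generate_pow_on_finite_carrier[OF \<open>finite (carrier G)\<close> s] by blast
  obtain j where j: "ord s = p ^ j"
    using ord_prime_power[OF assms(1,3) s] .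
  obtain n where n: "[geom_sum \<rho> n = m] (mod ord s)"
  proof (cases "j = 0")
    case True
    then show ?thesis
      using that[of 0] j by (simp add: cong_def)
  next
    case False
    then have "[\<rho> = 1] (mod p)"
      using conj_exponent_cong_one[OF assms(1,3,4) s hs] j by simp
    then show ?thesis
      using geom_sum_surj_mod_prime_power[OF assms(1,2)] j that by metis
  qed
  have "s [^] geom_sum \<rho> n = y"
    using nat_pow_eq_iff_cong[OF s] n y by simp
  then have "h [^] n \<otimes> g \<otimes> inv (h [^] n) = y \<otimes> g"
    using conj_orbit_geom_sum[OF assms(4,5) s hs hg, of n] by simp
  then have "y = h [^] n \<otimes> g \<otimes> inv (h [^] n) \<otimes> inv g"
    using assms(4,5) y s by (simp add: m_assoc)
  then show "y \<in> commutators_with G g"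
    unfolding commutators_with_def using assms(4) by blast
qed

lemma subgroup_commutators_with:
  assumes "Factorial_Ring.prime p" "odd p" "order G = p ^ N"
    and "x \<in> carrier G" "derived G (carrier G) = generate G {x}" "g \<in> carrier G"
  shows "subgroup (commutators_with G g) G"
proof (rule subgroup_if_union_of_cyclic_chain)
  have fin: "finite (carrier G)"
    using assms(3) prime_gt_0_nat[OF assms(1)] order_gt_0_iff_finite by simp
  have S_D: "commutators_with G g \<subseteq> derived G (carrier G)"
    using commutators_with_subset_derived[OF assms(6)] .
  then show "commutators_with G g \<subseteq> carrier G"
    using derived_in_carrier[OF subset_refl] by blast
  then show "finite (commutators_with G g)"
    using fin finite_subset by blast
  show "commutators_with G g \<noteq> {}"
    using one_mem_commutators_with[OF assms(6)] by blast
  show "generate G {s} \<subseteq> commutators_with G g" if s_mem: "s \<in> commutators_with G g" for s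
  proof -
    obtain h where h: "h \<in> carrier G" and s: "s = h \<otimes> g \<otimes> inv h \<otimes> inv g"
      using s_mem unfolding commutators_with_def by blast
    have "s \<in> derived G (carrier G)"
      using S_D s_mem by blast
    then obtain \<rho> :: nat where "h \<otimes> s \<otimes> inv h = s [^] \<rho>"
      using conj_cyclic_normal_eq_nat_pow[OF fin derived_self_is_normal assms(4,5) _ h] by blast
    then show ?thesis
      unfolding s by (rule generate_commutator_subset_commutators_with[OF assms(1-3) h assms(6)])
  qed
  show "generate G {a} \<subseteq> generate G {b} \<or> generate G {b} \<subseteq> generate G {a}"
    if "a \<in> commutators_with G g" "b \<in> commutators_with G g" for a b
  proof (rule cyclic_prime_power_subgroups_chain[OF assms(1,4)])
    show "ord x dvd p ^ N"
      using ord_dvd_group_order[OF assms(4)] assms(3) by simp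
    show "a \<in> generate G {x}" "b \<in> generate G {x}"
      using that S_D assms(5) by blast+
  qed
qed

end

theorem mainTheorem4:
  fixes G (structure) and p :: nat
  assumes "group G"
    and "Factorial_Ring.prime p" and "odd p"
    and "finite (carrier G)"
    and "\<exists>n. card (carrier G) = p ^ n"
    and "cyclic_group (G\<lparr>carrier := derived G (carrier G)\<rparr>)"
  shows "\<forall>g \<in> carrier G. \<exists>K. subgroup K G \<and> K \<subseteq> derived G (carrier G)
           \<and> conj_class G g = K #> g"
proof
  interpret group G by (rule assms(1))
  fix g
  assume g: "g \<in> carrier G"
  obtain N where N: "order G = p ^ N"
    using assms(5) by (auto simp: order_def)
  obtain x where "x \<in> derived G (carrier G)" and D: "derived G (carrier G) = generate G {x}"
    using cyclic_subgroup_eq_generate[OF derived_is_subgroup assms(6)] by blast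
  then have x: "x \<in> carrier G"
    using derived_in_carrier[OF subset_refl] by blast
  show "\<exists>K. subgroup K G \<and> K \<subseteq> derived G (carrier G) \<and> conj_class G g = K #> g"
  proof (intro exI conjI)
    show "subgroup (commutators_with G g) G"
      using subgroup_commutators_with[OF assms(2,3) N x D g] .
    show "commutators_with G g \<subseteq> derived G (carrier G)"
      using commutators_with_subset_derived[OF g] .
    show "conj_class G g = commutators_with G g #> g"
      using conj_class_eq_commutators_with_rcos[OF g] .
  qed
qed

end
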